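(* Let $\mathcal{Q}\subset\mathbb{R}^n$ be compact and let $(\mathcal{E},\mathcal{D})$ be a compression code for $\mathcal{Q}$ operating at rate $r$ and distortion $\delta$, with codebook $\mathcal{C}$. Let $A\in\mathbb{R}^{d\times n}$ have i.i.d. $\mathcal{N}(0,1)$ entries. For ${\bf x}_o\in\mathcal{Q}$ let ${\bf y}_o=A{\bf x}_o+{\bf z}$, where ${\bf z}\in\mathbb{R}^d$ is a noise vector (possibly depending on $A$ and ${\bf x}_o$) satisfying $\|{\bf z}\|_2\le\zeta$, and let $\hat{{\bf x}}_o$ be any element of $\arg\min_{{\bf c}\in\mathcal{C}}\|{\bf y}_o-A{\bf c}\|_2^2$. Then for arbitrary $\tau_1>0$ and $\tau_2\in(0,1)$, \[ \|\hat{{\bf x}}_o-{\bf x}_o\|_2\le\delta\sqrt{\frac{1+\tau_1}{1-\tau_2}}+\frac{2\zeta}{\sqrt{(1-\tau_2)d}} \] with probability exceeding \[ 1-2^{r}{\rm e}^{\frac d2(\tau_2+\log(1-\tau_2))}-{\rm e}^{-\frac d2(\tau_1-\log(1+\tau_1))}. \]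
   Context: A compression code $(\mathcal{E},\mathcal{D})$ for $\mathcal{Q}$ at rate $r$ consists of an encoder $\mathcal{E}:\mathcal{Q}\to\{1,2,\dots,2^r\}$ and a decoder $\mathcal{D}:\{1,\dots,2^r\}\to\mathbb{R}^n$; its codebook is $\mathcal{C}=\{\mathcal{D}(\mathcal{E}({\bf x})):{\bf x}\in\mathcal{Q}\}$, and its distortion is $\delta=\sup_{{\bf x}\in\mathcal{Q}}\|{\bf x}-\mathcal{D}(\mathcal{E}({\bf x}))\|_2$. $\log$ is the natural logarithm. The probability is over $A$. *)

theory Defs
  imports "HOL-Probability.Probability"
begin

definition compression_code :: "(real^'n) set \<Rightarrow> nat \<Rightarrow> (real^'n \<Rightarrow> nat) \<Rightarrow> (nat \<Rightarrow> real^'n) \<Rightarrow> bool" where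
  "compression_code Q r E D \<longleftrightarrow> (\<forall>x\<in>Q. E x \<in> {1..2^r})"

definition codebook :: "(real^'n) set \<Rightarrow> (real^'n \<Rightarrow> nat) \<Rightarrow> (nat \<Rightarrow> real^'n) \<Rightarrow> (real^'n) set" where
  "codebook Q E D = (\<lambda>x. D (E x)) ` Q"

definition distortion :: "(real^'n) set \<Rightarrow> (real^'n \<Rightarrow> nat) \<Rightarrow> (nat \<Rightarrow> real^'n) \<Rightarrow> real" where
  "distortion Q E D = (SUP x\<in>Q. norm (x - D (E x)))"

end

theory Submission
  imports Defs
begin

text \<open>For a fixed vector \<open>v \<noteq> 0\<close> the coordinates of \<open>A v / \<parallel>v\<parallel>\<close> are independent standard
  normals, so \<open>\<parallel>A v\<parallel>\<^sup>2 / \<parallel>v\<parallel>\<^sup>2\<close> is \<open>\<chi>\<^sup>2\<close> with \<open>d\<close> degrees of freedom, and Chernoff bounds on its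
  moment generating function give both tails. A union bound over the at most \<open>2\<^sup>r\<close> vectors
  \<open>c - x\<^sub>o\<close> (lower tail) and the single vector \<open>D (E x\<^sub>o) - x\<^sub>o\<close> (upper tail) yields an event
  of the stated probability on which \<open>A\<close> nearly preserves these norms. There the rest is
  deterministic: comparing the least-squares codeword \<open>x'\<close> with \<open>D (E x\<^sub>o)\<close>, which is within
  \<open>\<delta>\<close> of \<open>x\<^sub>o\<close>, the triangle inequality gives
  \<open>\<surd>((1 - \<tau>\<^sub>2) d) \<parallel>x' - x\<^sub>o\<parallel> \<le> \<surd>((1 + \<tau>\<^sub>1) d) \<delta> + 2 \<zeta>\<close>.\<close>

lemma std_normal_density_mult_exp_square:
  fixes c :: real
  assumes "c < 1/2"
  shows "std_normal_density x * exp (c * x\<^sup>2)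
       = (1 - 2*c) powr (-1/2) * normal_density 0 (1 / sqrt (1 - 2*c)) x"
proof -
  define l where "l = 1 - 2*c"
  have l: "0 < l" using assms by (simp add: l_def)
  have "exp (- x\<^sup>2 / 2) * exp (c * x\<^sup>2) = exp (- (l * x\<^sup>2) / 2)"
    by (simp add: l_def field_simps flip: exp_add)
  moreover have "normal_density 0 (1 / sqrt l) x = sqrt l / sqrt (2*pi) * exp (- (l * x\<^sup>2) / 2)"
    using l by (simp add: normal_density_def power_divide real_sqrt_divide real_sqrt_mult field_simps)
  moreover have "l powr (-1/2) = 1 / sqrt l"
    using l by (simp add: powr_minus_divide powr_half_sqrt)
  ultimately have "std_normal_density x * exp (c * x\<^sup>2) = l powr (-1/2) * normal_density 0 (1 / sqrt l) x"
    using l by (simp add: std_normal_density_def)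
  then show ?thesis by (simp add: l_def)
qed

lemma (in prob_space) nn_integral_exp_mult_square_std_normal:
  assumes X: "distributed M lborel X std_normal_density" and "c < 1/2"
  shows "(\<integral>\<^sup>+\<omega>. exp (c * (X \<omega>)\<^sup>2) \<partial>M) = ennreal ((1 - 2*c) powr (-1/2))"
proof -
  have "(\<integral>\<^sup>+\<omega>. exp (c * (X \<omega>)\<^sup>2) \<partial>M)
      = (\<integral>\<^sup>+x. ennreal (std_normal_density x) * ennreal (exp (c * x\<^sup>2)) \<partial>lborel)"
    by (rule distributed_nn_integral[OF X, symmetric]) simp
  also have "\<dots> = (\<integral>\<^sup>+x. ennreal ((1 - 2*c) powr (-1/2))
                         * ennreal (normal_density 0 (1 / sqrt (1 - 2*c)) x) \<partial>lborel)"
    using assms(2) by (intro nn_integral_cong) (simp add: std_normal_density_mult_exp_square flip: ennreal_mult'')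
  also have "\<dots> = ennreal ((1 - 2*c) powr (-1/2))
                 * (\<integral>\<^sup>+x. ennreal (normal_density 0 (1 / sqrt (1 - 2*c)) x) \<partial>lborel)"
    by (rule nn_integral_cmult) simp
  also have "(\<integral>\<^sup>+x. ennreal (normal_density 0 (1 / sqrt (1 - 2*c)) x) \<partial>lborel) = 1"
    using assms(2) by (subst nn_integral_eq_integral) auto
  finally show ?thesis by simp
qed

lemma (in prob_space) nn_integral_exp_mult_sum_squares_std_normal:
  fixes X :: "'i \<Rightarrow> 'a \<Rightarrow> real"
  assumes I: "finite I" and ind: "indep_vars (\<lambda>_. borel) X I"
    and N: "\<And>i. i \<in> I \<Longrightarrow> distributed M lborel (X i) std_normal_density" and c: "c < 1/2"
  shows "(\<integral>\<^sup>+\<omega>. exp (c * (\<Sum>i\<in>I. (X i \<omega>)\<^sup>2)) \<partial>M)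
       = ennreal ((1 - 2*c) powr (- real (card I) / 2))"
proof -
  have "(\<integral>\<^sup>+\<omega>. exp (c * (\<Sum>i\<in>I. (X i \<omega>)\<^sup>2)) \<partial>M)
      = (\<integral>\<^sup>+\<omega>. (\<Prod>i\<in>I. ennreal (exp (c * (X i \<omega>)\<^sup>2))) \<partial>M)"
    by (simp add: sum_distrib_left exp_sum I prod_ennreal)
  also have "\<dots> = (\<Prod>i\<in>I. \<integral>\<^sup>+\<omega>. exp (c * (X i \<omega>)\<^sup>2) \<partial>M)"
    by (intro indep_vars_nn_integral I indep_vars_compose2[OF ind]) simp_all
  also have "\<dots> = (\<Prod>i\<in>I. ennreal ((1 - 2*c) powr (-1/2)))"
    using N c by (intro prod.cong refl nn_integral_exp_mult_square_std_normal) auto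
  also have "\<dots> = ennreal ((1 - 2*c) powr (- real (card I) / 2))"
    using c by (simp add: ennreal_power powr_power)
  finally show ?thesis .
qed

lemma (in prob_space) nn_integral_sum_squares_std_normal:
  fixes X :: "'i \<Rightarrow> 'a \<Rightarrow> real"
  assumes "finite I" and N: "\<And>i. i \<in> I \<Longrightarrow> distributed M lborel (X i) std_normal_density"
  shows "(\<integral>\<^sup>+\<omega>. (\<Sum>i\<in>I. (X i \<omega>)\<^sup>2) \<partial>M) = card I"
proof -
  have [measurable]: "X i \<in> borel_measurable M" if "i \<in> I" for i
    using distributed_measurable[OF N[OF that]] by simp
  have square: "(\<integral>\<^sup>+\<omega>. (X i \<omega>)\<^sup>2 \<partial>M) = 1" if "i \<in> I" for i
  proof -
    have "(\<integral>\<^sup>+\<omega>. (X i \<omega>)\<^sup>2 \<partial>M) = (\<integral>\<^sup>+x. ennreal (std_normal_density x) * ennreal (x\<^sup>2) \<partial>lborel)"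
      by (rule distributed_nn_integral[OF N[OF that], symmetric]) simp
    also have "\<dots> = (\<integral>\<^sup>+x. std_normal_density x * x ^ 2 \<partial>lborel)"
      by (intro nn_integral_cong) (simp flip: ennreal_mult'')
    also have "\<dots> = integral\<^sup>L lborel (\<lambda>x. std_normal_density x * x ^ 2)"
      by (subst nn_integral_eq_integral) (auto intro!: integrable_std_normal_moment)
    also have "integral\<^sup>L lborel (\<lambda>x. std_normal_density x * x ^ 2) = 1"
      using integral_std_normal_moment_even[of 1] by (simp add: numeral_2_eq_2)
    finally show ?thesis by simp
  qed
  have "(\<integral>\<^sup>+\<omega>. (\<Sum>i\<in>I. (X i \<omega>)\<^sup>2) \<partial>M) = (\<integral>\<^sup>+\<omega>. (\<Sum>i\<in>I. ennreal ((X i \<omega>)\<^sup>2)) \<partial>M)"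
    by (intro nn_integral_cong) (simp add: sum_ennreal)
  also have "\<dots> = (\<Sum>i\<in>I. \<integral>\<^sup>+\<omega>. (X i \<omega>)\<^sup>2 \<partial>M)"
    by (intro nn_integral_sum) simp
  finally show ?thesis using square by simp
qed

lemma (in prob_space) prob_less_pos_if_nn_integral_less:
  fixes W :: "'a \<Rightarrow> real"
  assumes [measurable]: "W \<in> borel_measurable M" and "(\<integral>\<^sup>+\<omega>. W \<omega> \<partial>M) < ennreal a"
  shows "0 < prob {\<omega>\<in>space M. W \<omega> < a}"
proof (rule ccontr)
  assume "\<not> 0 < prob {\<omega>\<in>space M. W \<omega> < a}"
  then have "prob {\<omega>\<in>space M. W \<omega> < a} = 0"
    using measure_nonneg[of M "{\<omega>\<in>space M. W \<omega> < a}"] by linarith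
  then have "AE \<omega> in M. a \<le> W \<omega>"
    by (subst AE_iff_measurable[of "{\<omega>\<in>space M. W \<omega> < a}"]) (auto simp: emeasure_eq_measure)
  then have "(\<integral>\<^sup>+\<omega>. ennreal a \<partial>M) \<le> (\<integral>\<^sup>+\<omega>. W \<omega> \<partial>M)"
    by (intro nn_integral_mono_AE) (auto intro: ennreal_leI)
  with assms(2) show False by (simp add: emeasure_space_1)
qed

text \<open>Strict, because the exponential moment also pays for the event \<open>W < a\<close>,
  which has positive probability.\<close>
lemma (in prob_space) prob_ge_less_Chernoff:
  fixes W :: "'a \<Rightarrow> real"
  assumes [measurable]: "W \<in> borel_measurable M" and W_nonneg: "\<And>\<omega>. 0 \<le> W \<omega>" and "0 < s"
    and mgf: "(\<integral>\<^sup>+\<omega>. exp (s * W \<omega>) \<partial>M) = ennreal m"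
    and pos: "0 < prob {\<omega>\<in>space M. W \<omega> < a}"
  shows "prob {\<omega>\<in>space M. a \<le> W \<omega>} < exp (- s * a) * m"
proof -
  define S where "S = {\<omega>\<in>space M. a \<le> W \<omega>}"
  define T where "T = {\<omega>\<in>space M. W \<omega> < a}"
  have [measurable]: "S \<in> sets M" "T \<in> sets M" by (simp_all add: S_def T_def)
  have pointwise: "indicator S \<omega> + exp (- s * a) * indicator T \<omega> \<le> exp (- s * a) * exp (s * W \<omega>)"
    for \<omega>
  proof -
    have "exp (- s * a) * exp (s * W \<omega>) = exp (s * (W \<omega> - a))"
      by (simp add: algebra_simps flip: exp_add)
    moreover have "exp (- s * a) \<le> exp (- s * a) * exp (s * W \<omega>)"
      using \<open>0 < s\<close> W_nonneg[of \<omega>] by simp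
    ultimately show ?thesis
      using \<open>0 < s\<close> by (auto simp: S_def T_def indicator_def)
  qed
  have "ennreal (prob S + exp (- s * a) * prob T)
      = (\<integral>\<^sup>+\<omega>. ennreal (indicator S \<omega> + exp (- s * a) * indicator T \<omega>) \<partial>M)"
    by (simp add: nn_integral_add nn_integral_cmult_indicator emeasure_eq_measure
        ennreal_plus ennreal_mult' ennreal_indicator)
  also have "\<dots> \<le> (\<integral>\<^sup>+\<omega>. ennreal (exp (- s * a) * exp (s * W \<omega>)) \<partial>M)"
    using pointwise by (intro nn_integral_mono ennreal_leI)
  also have "\<dots> = ennreal (exp (- s * a) * m)"
    using mgf by (simp add: nn_integral_cmult ennreal_mult')
  finally have "ennreal (prob S + exp (- s * a) * prob T) \<le> ennreal (exp (- s * a) * m)" .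
  moreover have "0 < prob S + exp (- s * a) * prob T"
    using pos by (simp add: T_def add_nonneg_pos)
  ultimately have "prob S + exp (- s * a) * prob T \<le> exp (- s * a) * m"
    unfolding ennreal_le_iff2 by linarith
  moreover have "0 < exp (- s * a) * prob T" using pos by (simp add: T_def)
  ultimately show ?thesis by (simp add: S_def)
qed

lemma (in prob_space) chi_square_lower_tail:
  fixes X :: "'i \<Rightarrow> 'a \<Rightarrow> real" and \<tau> :: real
  assumes "finite I" and ind: "indep_vars (\<lambda>_. borel) X I"
    and N: "\<And>i. i \<in> I \<Longrightarrow> distributed M lborel (X i) std_normal_density"
    and "0 < \<tau>" "\<tau> < 1"
  shows "prob {\<omega>\<in>space M. (\<Sum>i\<in>I. (X i \<omega>)\<^sup>2) \<le> (1 - \<tau>) * card I}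
       \<le> exp (card I / 2 * (\<tau> + ln (1 - \<tau>)))"
proof -
  define k where "k = real (card I)"
  define s where "s = \<tau> / (2 * (1 - \<tau>))"
  have s: "0 < s" using assms by (simp add: s_def)
  have [measurable]: "X i \<in> borel_measurable M" if "i \<in> I" for i
    using distributed_measurable[OF N[OF that]] by simp
  have "emeasure M {\<omega>\<in>space M. (\<Sum>i\<in>I. (X i \<omega>)\<^sup>2) \<le> (1 - \<tau>) * k}
      \<le> ennreal (exp (s * ((1 - \<tau>) * k)))
          * (\<integral>\<^sup>+\<omega>. ennreal (exp (- s * (\<Sum>i\<in>I. (X i \<omega>)\<^sup>2))) * indicator (space M) \<omega> \<partial>M)"
    by (rule Chernoff_ineq_nn_integral_le) (use s in auto)
  also have "(\<integral>\<^sup>+\<omega>. ennreal (exp (- s * (\<Sum>i\<in>I. (X i \<omega>)\<^sup>2))) * indicator (space M) \<omega> \<partial>M)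
      = ennreal ((1 - 2 * - s) powr (- k / 2))"
    unfolding k_def using s
    by (subst nn_integral_exp_mult_sum_squares_std_normal[symmetric, OF assms(1) ind N])
       (auto intro!: nn_integral_cong)
  also have "ennreal (exp (s * ((1 - \<tau>) * k))) * ennreal ((1 - 2 * - s) powr (- k / 2))
      = ennreal (exp (k / 2 * (\<tau> + ln (1 - \<tau>))))"
  proof -
    have "1 - 2 * - s = inverse (1 - \<tau>)" using assms by (simp add: s_def field_simps)
    then have "(1 - 2 * - s) powr (- k / 2) = exp (k / 2 * ln (1 - \<tau>))"
      using assms by (simp add: powr_def ln_inverse)
    moreover have "s * ((1 - \<tau>) * k) = k / 2 * \<tau>" using assms by (simp add: s_def field_simps)
    ultimately show ?thesis by (simp add: algebra_simps flip: exp_add ennreal_mult')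
  qed
  finally show ?thesis
    by (simp add: emeasure_eq_measure k_def)
qed

lemma (in prob_space) chi_square_upper_tail:
  fixes X :: "'i \<Rightarrow> 'a \<Rightarrow> real" and \<tau> :: real
  assumes "finite I" "I \<noteq> {}" and ind: "indep_vars (\<lambda>_. borel) X I"
    and N: "\<And>i. i \<in> I \<Longrightarrow> distributed M lborel (X i) std_normal_density"
    and "0 < \<tau>"
  shows "prob {\<omega>\<in>space M. (1 + \<tau>) * card I \<le> (\<Sum>i\<in>I. (X i \<omega>)\<^sup>2)}
       < exp (- (card I / 2) * (\<tau> - ln (1 + \<tau>)))"
proof -
  define k where "k = real (card I)"
  define s where "s = \<tau> / (2 * (1 + \<tau>))"
  have k: "0 < k" using assms by (simp add: k_def card_gt_0_iff)
  have s: "0 < s" "s < 1/2" using assms by (simp_all add: s_def field_simps)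
  have [measurable]: "X i \<in> borel_measurable M" if "i \<in> I" for i
    using distributed_measurable[OF N[OF that]] by simp
  have "(\<integral>\<^sup>+\<omega>. (\<Sum>i\<in>I. (X i \<omega>)\<^sup>2) \<partial>M) < ennreal ((1 + \<tau>) * k)"
    using assms k
    by (simp add: nn_integral_sum_squares_std_normal k_def ennreal_of_nat_eq_real_of_nat ennreal_lessI)
  then have "0 < prob {\<omega>\<in>space M. (\<Sum>i\<in>I. (X i \<omega>)\<^sup>2) < (1 + \<tau>) * k}"
    by (rule prob_less_pos_if_nn_integral_less[rotated]) simp
  then have "prob {\<omega>\<in>space M. (1 + \<tau>) * k \<le> (\<Sum>i\<in>I. (X i \<omega>)\<^sup>2)}
      < exp (- s * ((1 + \<tau>) * k)) * (1 - 2 * s) powr (- k / 2)"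
    using s unfolding k_def
    by (intro prob_ge_less_Chernoff nn_integral_exp_mult_sum_squares_std_normal assms)
       (auto intro: sum_nonneg)
  also have "exp (- s * ((1 + \<tau>) * k)) * (1 - 2 * s) powr (- k / 2)
      = exp (- (k / 2) * (\<tau> - ln (1 + \<tau>)))"
  proof -
    have "1 - 2 * s = inverse (1 + \<tau>)" using assms by (simp add: s_def field_simps)
    then have "(1 - 2 * s) powr (- k / 2) = exp (k / 2 * ln (1 + \<tau>))"
      using assms by (simp add: powr_def ln_inverse)
    moreover have "s * ((1 + \<tau>) * k) = k / 2 * \<tau>" using assms by (simp add: s_def field_simps)
    ultimately show ?thesis by (simp add: algebra_simps flip: exp_add)
  qed
  finally show ?thesis by (simp add: k_def)
qed

lemma power2_norm_vec: "(norm x)\<^sup>2 = (\<Sum>i\<in>UNIV. (x $ i)\<^sup>2)"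
  for x :: "real^'n"
  unfolding power2_norm_eq_inner inner_vec_def by (simp add: power2_eq_square)

lemma power2_norm_matrix_vector_mult:
  fixes m :: "real^'n^'d" and v :: "real^'n"
  assumes "v \<noteq> 0"
  shows "(norm (m *v v))\<^sup>2 = (norm v)\<^sup>2 * (\<Sum>i\<in>UNIV. ((m *v v) $ i / norm v)\<^sup>2)"
  using assms by (simp add: power2_norm_vec[of "m *v v"] sum_distrib_left power_divide)

lemma (in prob_space) weighted_sum_indep_std_normal:
  assumes "finite J" "J \<noteq> {}" and ind: "indep_vars (\<lambda>_. borel) Z J"
    and N: "\<And>j. j \<in> J \<Longrightarrow> distributed M lborel (Z j) std_normal_density"
    and w: "\<And>j. j \<in> J \<Longrightarrow> w j \<noteq> 0"
  shows "distributed M lborel (\<lambda>\<omega>. \<Sum>j\<in>J. w j * Z j \<omega>)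
           (normal_density 0 (sqrt (\<Sum>j\<in>J. (w j)\<^sup>2)))"
proof -
  have "distributed M lborel (\<lambda>\<omega>. w j * Z j \<omega>) (normal_density 0 \<bar>w j\<bar>)" if "j \<in> J" for j
    using normal_density_affine[OF N[OF that] _ w[OF that], of 0] by simp
  then have "distributed M lborel (\<lambda>\<omega>. \<Sum>j\<in>J. w j * Z j \<omega>)
      (normal_density (\<Sum>j\<in>J. 0) (sqrt (\<Sum>j\<in>J. \<bar>w j\<bar>\<^sup>2)))"
    using w by (intro sum_indep_normal assms indep_vars_compose2[OF ind]) auto
  then show ?thesis by simp
qed

lemma (in prob_space) gaussian_matrix_vector_component_std_normal:
  fixes A :: "'a \<Rightarrow> real^'n^'d" and v :: "real^'n"
  assumes ind: "indep_vars (\<lambda>_. borel) (\<lambda>(i, j) \<omega>. A \<omega> $ i $ j) UNIV"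
    and N: "\<And>i j. distributed M lborel (\<lambda>\<omega>. A \<omega> $ i $ j) std_normal_density"
    and "v \<noteq> 0"
  shows "distributed M lborel (\<lambda>\<omega>. (A \<omega> *v v) $ i / norm v) std_normal_density"
proof -
  \<comment> \<open>only the nonzero weights, since \<open>sum_indep_normal\<close> needs positive standard deviations\<close>
  define J where "J = {j. v $ j \<noteq> 0}"
  have J: "finite J" "J \<noteq> {}" using assms(3) by (auto simp: J_def vec_eq_iff)
  have row_sum: "(\<Sum>p\<in>{i} \<times> J. g p) = (\<Sum>j\<in>UNIV. g (i, j))" if "\<And>j. j \<notin> J \<Longrightarrow> g (i, j) = 0"
    for g :: "'d \<times> 'n \<Rightarrow> real"
  proof -
    have "(\<Sum>p\<in>{i} \<times> J. g p) = (\<Sum>j\<in>J. g (i, j))"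
      using sum.cartesian_product[where A="{i}" and B=J and g="\<lambda>i j. g (i, j)"] by simp
    also have "\<dots> = (\<Sum>j\<in>UNIV. g (i, j))"
      using that by (intro sum.mono_neutral_left) auto
    finally show ?thesis .
  qed
  have "(\<Sum>p\<in>{i} \<times> J. v $ snd p * A \<omega> $ fst p $ snd p) = (A \<omega> *v v) $ i" for \<omega>
    by (subst row_sum) (auto simp: J_def matrix_vector_mult_def mult.commute)
  moreover have "sqrt (\<Sum>p\<in>{i} \<times> J. (v $ snd p)\<^sup>2) = norm v"
    by (subst row_sum) (auto simp: J_def power2_norm_vec[symmetric])
  moreover have "distributed M lborel (\<lambda>\<omega>. \<Sum>p\<in>{i} \<times> J. v $ snd p * A \<omega> $ fst p $ snd p)
      (normal_density 0 (sqrt (\<Sum>p\<in>{i} \<times> J. (v $ snd p)\<^sup>2)))"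
  proof (intro weighted_sum_indep_std_normal)
    show "indep_vars (\<lambda>_. borel) (\<lambda>p \<omega>. A \<omega> $ fst p $ snd p) ({i} \<times> J)"
      using indep_vars_subset[OF ind, of "{i} \<times> J"] by (simp add: split_beta')
  qed (use J in \<open>auto simp: J_def N\<close>)
  ultimately have "distributed M lborel (\<lambda>\<omega>. (A \<omega> *v v) $ i) (normal_density 0 (norm v))"
    by simp
  then show ?thesis
    using normal_standard_normal_convert[of "norm v" "\<lambda>\<omega>. (A \<omega> *v v) $ i" 0] assms(3) by simp
qed

lemma (in prob_space) indep_vars_matrix_vector_mult_components:
  fixes A :: "'a \<Rightarrow> real^'n^'d" and v :: "real^'n"
  assumes ind: "indep_vars (\<lambda>_. borel) (\<lambda>(i, j) \<omega>. A \<omega> $ i $ j) UNIV"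
  shows "indep_vars (\<lambda>_. borel) (\<lambda>i \<omega>. (A \<omega> *v v) $ i) UNIV"
proof -
  define K where "K i = {i} \<times> (UNIV :: 'n set)" for i :: 'd
  have rows: "indep_vars (\<lambda>i. PiM (K i) (\<lambda>_. borel))
      (\<lambda>i \<omega>. restrict (\<lambda>p. A \<omega> $ fst p $ snd p) (K i)) UNIV"
    using indep_vars_restrict[OF ind, of UNIV K]
    by (auto simp: K_def disjoint_family_on_def split_beta')
  have "(\<lambda>h. \<Sum>j\<in>UNIV. h (i, j) * v $ j) \<in> borel_measurable (PiM (K i) (\<lambda>_. borel))" for i
  proof -
    have "\<And>j. (\<lambda>h. h (i, j)) \<in> borel_measurable (PiM (K i) (\<lambda>_. borel))"
      by (rule measurable_component_singleton) (simp add: K_def)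
    then show ?thesis by measurable
  qed
  from indep_vars_compose2[OF rows this] show ?thesis
    by (simp add: K_def matrix_vector_mult_def)
qed

lemma (in prob_space) gaussian_matrix_norm_lower_tail:
  fixes A :: "'a \<Rightarrow> real^'n^'d" and v :: "real^'n" and \<tau> :: real
  assumes ind: "indep_vars (\<lambda>_. borel) (\<lambda>(i, j) \<omega>. A \<omega> $ i $ j) UNIV"
    and N: "\<And>i j. distributed M lborel (\<lambda>\<omega>. A \<omega> $ i $ j) std_normal_density"
    and "0 < \<tau>" "\<tau> < 1"
  shows "prob {\<omega>\<in>space M. (norm (A \<omega> *v v))\<^sup>2 < (1 - \<tau>) * CARD('d) * (norm v)\<^sup>2}
       \<le> exp (CARD('d) / 2 * (\<tau> + ln (1 - \<tau>)))"
proof (cases "v = 0")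
  case False
  define X where "X i \<omega> = (A \<omega> *v v) $ i / norm v" for i \<omega>
  have N': "distributed M lborel (X i) std_normal_density" for i
    unfolding X_def by (rule gaussian_matrix_vector_component_std_normal[OF ind N False])
  have ind': "indep_vars (\<lambda>_. borel) X UNIV"
    unfolding X_def by (rule indep_vars_compose2[OF indep_vars_matrix_vector_mult_components[OF ind]]) simp
  have [measurable]: "X i \<in> borel_measurable M" for i
    using distributed_measurable[OF N'] by simp
  have "{\<omega>\<in>space M. (norm (A \<omega> *v v))\<^sup>2 < (1 - \<tau>) * CARD('d) * (norm v)\<^sup>2} \<subseteq> {\<omega>\<in>space M. (\<Sum>i\<in>UNIV. (X i \<omega>)\<^sup>2) \<le> (1 - \<tau>) * CARD('d)}"
    using False by (auto simp: X_def power2_norm_matrix_vector_mult mult.commute[of "(norm v)\<^sup>2"])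
  then have "prob {\<omega>\<in>space M. (norm (A \<omega> *v v))\<^sup>2 < (1 - \<tau>) * CARD('d) * (norm v)\<^sup>2} \<le> prob {\<omega>\<in>space M. (\<Sum>i\<in>UNIV. (X i \<omega>)\<^sup>2) \<le> (1 - \<tau>) * CARD('d)}"
    by (rule finite_measure_mono) measurable
  also have "\<dots> \<le> exp (CARD('d) / 2 * (\<tau> + ln (1 - \<tau>)))"
    by (rule chi_square_lower_tail[OF _ ind' N' assms(3,4)]) simp
  finally show ?thesis .
qed simp

lemma (in prob_space) gaussian_matrix_norm_upper_tail:
  fixes A :: "'a \<Rightarrow> real^'n^'d" and v :: "real^'n" and \<tau> :: real
  assumes ind: "indep_vars (\<lambda>_. borel) (\<lambda>(i, j) \<omega>. A \<omega> $ i $ j) UNIV"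
    and N: "\<And>i j. distributed M lborel (\<lambda>\<omega>. A \<omega> $ i $ j) std_normal_density"
    and "0 < \<tau>"
  shows "prob {\<omega>\<in>space M. (1 + \<tau>) * CARD('d) * (norm v)\<^sup>2 < (norm (A \<omega> *v v))\<^sup>2}
       < exp (- (CARD('d) / 2) * (\<tau> - ln (1 + \<tau>)))"
proof (cases "v = 0")
  case False
  define X where "X i \<omega> = (A \<omega> *v v) $ i / norm v" for i \<omega>
  have N': "distributed M lborel (X i) std_normal_density" for i
    unfolding X_def by (rule gaussian_matrix_vector_component_std_normal[OF ind N False])
  have ind': "indep_vars (\<lambda>_. borel) X UNIV"
    unfolding X_def by (rule indep_vars_compose2[OF indep_vars_matrix_vector_mult_components[OF ind]]) simp
  have [measurable]: "X i \<in> borel_measurable M" for i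
    using distributed_measurable[OF N'] by simp
  have "{\<omega>\<in>space M. (1 + \<tau>) * CARD('d) * (norm v)\<^sup>2 < (norm (A \<omega> *v v))\<^sup>2} \<subseteq> {\<omega>\<in>space M. (1 + \<tau>) * CARD('d) \<le> (\<Sum>i\<in>UNIV. (X i \<omega>)\<^sup>2)}"
    using False by (auto simp: X_def power2_norm_matrix_vector_mult mult.commute[of "(norm v)\<^sup>2"])
  then have "prob {\<omega>\<in>space M. (1 + \<tau>) * CARD('d) * (norm v)\<^sup>2 < (norm (A \<omega> *v v))\<^sup>2} \<le> prob {\<omega>\<in>space M. (1 + \<tau>) * CARD('d) \<le> (\<Sum>i\<in>UNIV. (X i \<omega>)\<^sup>2)}"
    by (rule finite_measure_mono) measurable
  also have "\<dots> < exp (- (CARD('d) / 2) * (\<tau> - ln (1 + \<tau>)))"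
    by (rule chi_square_upper_tail[OF _ _ ind' N' assms(3)]) simp_all
  finally show ?thesis .
qed simp

lemma (in prob_space) prob_Un_UN_le_sum:
  assumes "A \<in> events" "finite V" "\<And>v. v \<in> V \<Longrightarrow> B v \<in> events"
  shows "prob (A \<union> (\<Union>v\<in>V. B v)) \<le> prob A + (\<Sum>v\<in>V. prob (B v))"
proof -
  have "prob (A \<union> (\<Union>v\<in>V. B v)) \<le> prob A + prob (\<Union>v\<in>V. B v)"
    using assms by (intro measure_Un_le) auto
  also have "prob (\<Union>v\<in>V. B v) \<le> (\<Sum>v\<in>V. prob (B v))"
    using assms by (intro finite_measure_subadditive_finite) auto
  finally show ?thesis by simp
qed

lemma (in prob_space) gaussian_matrix_norm_bounds_event:
  fixes A :: "'a \<Rightarrow> real^'n^'d" and V :: "(real^'n) set" and w :: "real^'n"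
    and K :: nat and \<tau>1 \<tau>2 :: real
  assumes ind: "indep_vars (\<lambda>_. borel) (\<lambda>(i, j) \<omega>. A \<omega> $ i $ j) UNIV"
    and N: "\<And>i j. distributed M lborel (\<lambda>\<omega>. A \<omega> $ i $ j) std_normal_density"
    and "finite V" "card V \<le> K" and "0 < \<tau>1" and "0 < \<tau>2" "\<tau>2 < 1"
  shows "\<exists>S\<in>sets M.
     prob S > 1 - K * exp (CARD('d) / 2 * (\<tau>2 + ln (1 - \<tau>2)))
                - exp (- (CARD('d) / 2) * (\<tau>1 - ln (1 + \<tau>1))) \<and>
     (\<forall>\<omega>\<in>S. (\<forall>v\<in>V. (1 - \<tau>2) * CARD('d) * (norm v)\<^sup>2 \<le> (norm (A \<omega> *v v))\<^sup>2) \<and>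
             (norm (A \<omega> *v w))\<^sup>2 \<le> (1 + \<tau>1) * CARD('d) * (norm w)\<^sup>2)"
proof -
  have [measurable]: "(\<lambda>\<omega>. A \<omega> $ i $ j) \<in> borel_measurable M" for i j
    using distributed_measurable[OF N] by simp
  have [measurable]: "(\<lambda>\<omega>. (norm (A \<omega> *v v))\<^sup>2) \<in> borel_measurable M" for v
    by (simp only: power2_norm_vec matrix_vector_mult_def vec_lambda_beta) measurable
  define Low where "Low v = {\<omega>\<in>space M. (norm (A \<omega> *v v))\<^sup>2 < (1 - \<tau>2) * CARD('d) * (norm v)\<^sup>2}" for v
  define High where "High = {\<omega>\<in>space M. (1 + \<tau>1) * CARD('d) * (norm w)\<^sup>2 < (norm (A \<omega> *v w))\<^sup>2}"
  define Bad where "Bad = High \<union> (\<Union>v\<in>V. Low v)"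
  have [measurable]: "Low v \<in> sets M" for v by (simp add: Low_def)
  have [measurable]: "High \<in> sets M" by (simp add: High_def)
  have [measurable]: "Bad \<in> sets M"
    unfolding Bad_def using \<open>finite V\<close> by (intro sets.Un sets.finite_UN) simp_all
  have "prob Bad \<le> prob High + (\<Sum>v\<in>V. prob (Low v))"
    unfolding Bad_def using \<open>finite V\<close> by (intro prob_Un_UN_le_sum) simp_all
  moreover have "(\<Sum>v\<in>V. prob (Low v)) \<le> (\<Sum>v\<in>V. exp (CARD('d) / 2 * (\<tau>2 + ln (1 - \<tau>2))))"
    unfolding Low_def using assms by (intro sum_mono gaussian_matrix_norm_lower_tail)
  moreover have "prob High < exp (- (CARD('d) / 2) * (\<tau>1 - ln (1 + \<tau>1)))"
    unfolding High_def using assms by (intro gaussian_matrix_norm_upper_tail)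
  ultimately have "prob Bad < exp (- (CARD('d) / 2) * (\<tau>1 - ln (1 + \<tau>1)))
                  + card V * exp (CARD('d) / 2 * (\<tau>2 + ln (1 - \<tau>2)))"
    by simp
  moreover have "card V * exp (CARD('d) / 2 * (\<tau>2 + ln (1 - \<tau>2)))
      \<le> K * exp (CARD('d) / 2 * (\<tau>2 + ln (1 - \<tau>2)))"
    using \<open>card V \<le> K\<close> by (intro mult_right_mono) simp_all
  moreover have "prob (space M - Bad) = 1 - prob Bad"
    by (rule prob_compl) simp
  ultimately have "prob (space M - Bad) > 1 - K * exp (CARD('d) / 2 * (\<tau>2 + ln (1 - \<tau>2)))
                - exp (- (CARD('d) / 2) * (\<tau>1 - ln (1 + \<tau>1)))"
    by linarith
  moreover have "(\<forall>v\<in>V. (1 - \<tau>2) * CARD('d) * (norm v)\<^sup>2 \<le> (norm (A \<omega> *v v))\<^sup>2) \<and>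
             (norm (A \<omega> *v w))\<^sup>2 \<le> (1 + \<tau>1) * CARD('d) * (norm w)\<^sup>2" if "\<omega> \<in> space M - Bad" for \<omega>
    using that by (auto simp: Bad_def Low_def High_def not_less)
  ultimately show ?thesis by (intro bexI[of _ "space M - Bad"]) auto
qed

lemma codebook_subset: "compression_code Q r E D \<Longrightarrow> codebook Q E D \<subseteq> D ` {1..2^r}"
  by (auto simp: compression_code_def codebook_def)

lemma finite_codebook: "compression_code Q r E D \<Longrightarrow> finite (codebook Q E D)"
  by (rule finite_subset[OF codebook_subset]) auto

lemma card_codebook_le: "compression_code Q r E D \<Longrightarrow> card (codebook Q E D) \<le> 2^r"
proof -
  assume "compression_code Q r E D"
  then have "card (codebook Q E D) \<le> card (D ` {1..2^r})"
    by (intro card_mono codebook_subset) simp_all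
  also have "\<dots> \<le> 2^r"
    using card_image_le[of "{1..2^r}" D] by simp
  finally show ?thesis .
qed

lemma norm_diff_decode_le_distortion:
  assumes "bounded Q" "compression_code Q r E D" "x \<in> Q"
  shows "norm (x - D (E x)) \<le> distortion Q E D"
proof -
  obtain B where B: "\<And>x. x \<in> Q \<Longrightarrow> norm x \<le> B"
    using \<open>bounded Q\<close> by (auto simp: bounded_iff)
  have "norm (x - D (E x)) \<le> B + (\<Sum>c\<in>codebook Q E D. norm c)" if "x \<in> Q" for x
  proof -
    have "norm (D (E x)) \<le> (\<Sum>c\<in>codebook Q E D. norm c)"
      using that finite_codebook[OF assms(2)] by (intro member_le_sum) (auto simp: codebook_def)
    then show ?thesis using B[OF that] norm_triangle_ineq4[of x "D (E x)"] by linarith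
  qed
  then have "bdd_above ((\<lambda>x. norm (x - D (E x))) ` Q)"
    by (intro bdd_aboveI2) auto
  then show ?thesis
    unfolding distortion_def using \<open>x \<in> Q\<close> by (rule cSUP_upper2) simp
qed

lemma linear_least_squares_error_le:
  fixes f :: "'a::real_normed_vector \<Rightarrow> 'b::real_normed_vector"
  assumes "linear f"
    and opt: "(norm (f x + z - f x_hat))\<^sup>2 \<le> (norm (f x + z - f x_near))\<^sup>2"
    and "norm z \<le> \<zeta>" and near: "norm (x_near - x) \<le> \<delta>"
    and lower: "a * (norm (x_hat - x))\<^sup>2 \<le> (norm (f (x_hat - x)))\<^sup>2"
    and upper: "(norm (f (x_near - x)))\<^sup>2 \<le> b * (norm (x_near - x))\<^sup>2"
    and "0 < a" "0 \<le> b"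
  shows "norm (x_hat - x) \<le> \<delta> * sqrt (b / a) + 2 * \<zeta> / sqrt a"
proof -
  define u where "u = x_hat - x"
  define e where "e = x_near - x"
  have "norm (z - f u) \<le> norm (z - f e)"
    using opt by (simp add: u_def e_def linear_diff[OF \<open>linear f\<close>] algebra_simps)
  then have residual: "norm (f u) \<le> norm (f e) + 2 * \<zeta>"
    using norm_triangle_ineq2[of "f u" z] norm_minus_commute[of "f u" z]
      norm_triangle_ineq4[of z "f e"] \<open>norm z \<le> \<zeta>\<close> by linarith
  have "sqrt a * norm u \<le> norm (f u)"
    using real_sqrt_le_mono[OF lower] \<open>0 < a\<close> by (simp add: u_def real_sqrt_mult)
  moreover have "norm (f e) \<le> sqrt b * \<delta>"
  proof -
    have "norm (f e) \<le> sqrt b * norm e"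
      using real_sqrt_le_mono[OF upper] \<open>0 \<le> b\<close> by (simp add: e_def real_sqrt_mult)
    also have "\<dots> \<le> sqrt b * \<delta>"
      using near \<open>0 \<le> b\<close> by (intro mult_left_mono) (auto simp: e_def)
    finally show ?thesis .
  qed
  ultimately have "sqrt a * norm u \<le> sqrt b * \<delta> + 2 * \<zeta>"
    using residual by linarith
  then show ?thesis
    using \<open>0 < a\<close> by (simp add: u_def real_sqrt_divide field_simps)
qed

lemma compression_least_squares_error_le:
  fixes f :: "real^'n \<Rightarrow> 'b::real_normed_vector"
  assumes "linear f" "bounded Q" "compression_code Q r E D" "x \<in> Q"
    and "norm z \<le> \<zeta>" "x_hat \<in> codebook Q E D"
    and opt: "\<forall>c\<in>codebook Q E D. (norm (f x + z - f x_hat))\<^sup>2 \<le> (norm (f x + z - f c))\<^sup>2"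
    and lower: "\<forall>c\<in>codebook Q E D. a * (norm (c - x))\<^sup>2 \<le> (norm (f (c - x)))\<^sup>2"
    and upper: "(norm (f (D (E x) - x)))\<^sup>2 \<le> b * (norm (D (E x) - x))\<^sup>2"
    and "0 < a" "0 \<le> b"
  shows "norm (x_hat - x) \<le> distortion Q E D * sqrt (b / a) + 2 * \<zeta> / sqrt a"
proof (rule linear_least_squares_error_le[OF \<open>linear f\<close> _ \<open>norm z \<le> \<zeta>\<close> _ _ upper])
  have "D (E x) \<in> codebook Q E D" using \<open>x \<in> Q\<close> by (simp add: codebook_def)
  with opt show "(norm (f x + z - f x_hat))\<^sup>2 \<le> (norm (f x + z - f (D (E x))))\<^sup>2" by blast
  show "norm (D (E x) - x) \<le> distortion Q E D"
    using norm_diff_decode_le_distortion[OF assms(2-4)] by (simp add: norm_minus_commute)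
qed (use assms in auto)

theorem theorem2:
  fixes Q :: "(real^'n) set" and r :: nat and E :: "real^'n \<Rightarrow> nat" and D :: "nat \<Rightarrow> real^'n"
    and \<delta> \<zeta> \<tau>1 \<tau>2 :: real and xo :: "real^'n"
    and M :: "'w measure" and A :: "'w \<Rightarrow> real^'n^'d"
  assumes "compact Q"
    and "compression_code Q r E D"
    and "\<delta> = distortion Q E D"
    and "prob_space M"
    and "prob_space.indep_vars M (\<lambda>_. borel) (\<lambda>(i, j) \<omega>. A \<omega> $ i $ j) UNIV"
    and "\<And>i j. distributed M lborel (\<lambda>\<omega>. A \<omega> $ i $ j) std_normal_density"
    and "xo \<in> Q"
    and "\<tau>1 > 0" and "0 < \<tau>2" and "\<tau>2 < 1"
  shows "\<exists>S\<in>sets M.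
     measure M S > 1 - 2 ^ r * exp (real CARD('d) / 2 * (\<tau>2 + ln (1 - \<tau>2)))
                     - exp (- (real CARD('d) / 2) * (\<tau>1 - ln (1 + \<tau>1))) \<and>
     (\<forall>\<omega>\<in>S. \<forall>z :: real^'d. \<forall>xhat.
        norm z \<le> \<zeta> \<longrightarrow>
        xhat \<in> codebook Q E D \<longrightarrow>
        (\<forall>c\<in>codebook Q E D. (norm ((A \<omega> *v xo + z) - A \<omega> *v xhat))\<^sup>2
                               \<le> (norm ((A \<omega> *v xo + z) - A \<omega> *v c))\<^sup>2) \<longrightarrow>
        norm (xhat - xo) \<le> \<delta> * sqrt ((1 + \<tau>1) / (1 - \<tau>2))
                            + 2 * \<zeta> / sqrt ((1 - \<tau>2) * real CARD('d)))"
proof -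
  interpret prob_space M by fact
  let ?d = "real CARD('d)" and ?V = "(\<lambda>c. c - xo) ` codebook Q E D"
  have fin: "finite ?V" using finite_codebook[OF assms(2)] by simp
  have card: "card ?V \<le> 2 ^ r"
    using card_image_le[OF finite_codebook[OF assms(2)]] card_codebook_le[OF assms(2)] by (rule le_trans)
  obtain S where "S \<in> sets M"
    and prob_S: "prob S > 1 - 2 ^ r * exp (?d / 2 * (\<tau>2 + ln (1 - \<tau>2)))
                   - exp (- (?d / 2) * (\<tau>1 - ln (1 + \<tau>1)))"
    and good: "\<forall>\<omega>\<in>S. (\<forall>v\<in>?V. (1 - \<tau>2) * ?d * (norm v)\<^sup>2 \<le> (norm (A \<omega> *v v))\<^sup>2)
              \<and> (norm (A \<omega> *v (D (E xo) - xo)))\<^sup>2 \<le> (1 + \<tau>1) * ?d * (norm (D (E xo) - xo))\<^sup>2"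
    using gaussian_matrix_norm_bounds_event[where w="D (E xo) - xo", OF assms(5,6) fin card assms(8-10)]
    unfolding of_nat_power of_nat_numeral by blast
  show ?thesis
  proof (intro bexI[OF _ \<open>S \<in> sets M\<close>] conjI ballI allI impI)
    fix \<omega> z x_hat
    assume "\<omega> \<in> S" and z: "norm z \<le> \<zeta>" and x_hat: "x_hat \<in> codebook Q E D"
      and opt: "\<forall>c\<in>codebook Q E D. (norm (A \<omega> *v xo + z - A \<omega> *v x_hat))\<^sup>2
                                   \<le> (norm (A \<omega> *v xo + z - A \<omega> *v c))\<^sup>2"
    have lower: "\<forall>c\<in>codebook Q E D. (1 - \<tau>2) * ?d * (norm (c - xo))\<^sup>2 \<le> (norm (A \<omega> *v (c - xo)))\<^sup>2"
      and upper: "(norm (A \<omega> *v (D (E xo) - xo)))\<^sup>2 \<le> (1 + \<tau>1) * ?d * (norm (D (E xo) - xo))\<^sup>2"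
      using good \<open>\<omega> \<in> S\<close> by auto
    have "norm (x_hat - xo) \<le> \<delta> * sqrt ((1 + \<tau>1) * ?d / ((1 - \<tau>2) * ?d)) + 2 * \<zeta> / sqrt ((1 - \<tau>2) * ?d)"
      unfolding assms(3)
      by (rule compression_least_squares_error_le[OF _ compact_imp_bounded[OF assms(1)] assms(2,7)
            z x_hat opt lower upper]) (use assms(8-10) in simp_all)
    then show "norm (x_hat - xo) \<le> \<delta> * sqrt ((1 + \<tau>1) / (1 - \<tau>2)) + 2 * \<zeta> / sqrt ((1 - \<tau>2) * ?d)"
      by simp
  qed (fact prob_S)
qed

end
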